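(* Let $m,k\in\mathbb{N}$ and let $\beta,\gamma\in\mathbb{C}$ with $\beta-k-1,\ -m-k-\gamma,\ \beta-\gamma-m-k\notin\mathbb{Z}_0^-$. Then \[ {}_3F_2\left[\begin{array}{r} -m,\ \beta-k-1,\ -m-k-\gamma;\\ -m-k,\ \beta-\gamma-m-k;\end{array}1\right]_m=\frac{\left(\beta\right)_m\left(\gamma\right)_m}{\left(1+k\right)_m\left(1+k+\gamma-\beta\right)_m}. \]
   Context: $\mathbb{N}=\{1,2,3,\dots\}$, $\mathbb{Z}_0^-=\{0,-1,-2,\dots\}$. For $a\in\mathbb{C}$ and $n\in\mathbb{N}_0$, $(a)_0=1$ and $(a)_n=a(a+1)\cdots(a+n-1)$. For $N\in\mathbb{N}_0$, ${}_3F_2\left[\begin{array}{r} a_1,a_2,a_3;\\ b_1,b_2;\end{array}z\right]_N=\sum_{n=0}^{N}\frac{(a_1)_n(a_2)_n(a_3)_n}{(b_1)_n(b_2)_n}\frac{z^n}{n!}$ (the sum of the first $N+1$ terms), defined whenever $(b_1)_n(b_2)_n\neq0$ for $0\le n\le N$. *)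

theory Defs
  imports "HOL-Analysis.Analysis"
begin

definition hyp3F2_trunc ::
  "complex \<Rightarrow> complex \<Rightarrow> complex \<Rightarrow> complex \<Rightarrow> complex \<Rightarrow> complex \<Rightarrow> nat \<Rightarrow> complex" where
  "hyp3F2_trunc a1 a2 a3 b1 b2 z N =
     (\<Sum>n=0..N. pochhammer a1 n * pochhammer a2 n * pochhammer a3 n /
                 (pochhammer b1 n * pochhammer b2 n) * z ^ n / of_nat (fact n))"

end

theory Submission
  imports Defs
begin

(* The left-hand side is the terminating balanced series
   3F2[-m, a, b; c, 1 + a + b - c - m; 1] with a = beta - k - 1, b = -m - k - gamma, c = -m - k,
   so the theorem is an instance of the Pfaff-Saalschuetz summation
     sum_j t_n(j) = (c - a)_n (c - b)_n / ((c)_n (c - a - b)_n).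
   This is proved by induction on n: the sums S_n satisfy S_(n+1) = rho_n S_n with
   rho_n = (c - a + n)(c - b + n) / ((c + n)(c - a - b + n)), because
   t_(n+1)(j) - rho_n t_n(j) = G(j + 1) - G(j) for an explicit rational multiple G of t_(n+1).
   After expressing everything through t_(n+1)(j) and clearing denominators, this telescoping
   relation becomes a polynomial identity. *)

definition saalschuetz_term :: "nat \<Rightarrow> 'a \<Rightarrow> 'a \<Rightarrow> 'a \<Rightarrow> nat \<Rightarrow> 'a::field_char_0" where
  "saalschuetz_term n a b c j =
     pochhammer (- of_nat n) j * pochhammer a j * pochhammer b j /
     (pochhammer c j * pochhammer (1 + a + b - c - of_nat n) j * fact j)"

definition saalschuetz_certificate :: "nat \<Rightarrow> 'a \<Rightarrow> 'a \<Rightarrow> 'a \<Rightarrow> nat \<Rightarrow> 'a::field_char_0" where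
  "saalschuetz_certificate n a b c j =
     - saalschuetz_term (Suc n) a b c j * of_nat j * (c + of_nat j - 1) /
       ((of_nat n + 1) * (c + of_nat n))"

lemma of_nat_add_one_neq_0: "(of_nat n + 1 :: 'a::semiring_char_0) \<noteq> 0"
  by (metis of_nat_Suc of_nat_neq_0 add.commute)

lemma pochhammer_shift: "z * pochhammer (z + 1) n = pochhammer z n * (z + of_nat n)"
  by (metis pochhammer_Suc pochhammer_rec)

lemma pochhammer_reflect:
  fixes z :: "'a::comm_ring_1"
  shows "pochhammer (1 - z - of_nat n) n = (- 1) ^ n * pochhammer z n"
  using pochhammer_minus[of "z + of_nat n - 1" n] by (simp add: algebra_simps)

(* No side conditions are needed: where a denominator vanishes, both sides are 0. *)
lemma saalschuetz_term_Suc_index: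
  "saalschuetz_term n a b c (Suc j) = saalschuetz_term n a b c j *
     ((of_nat j - of_nat n) * (a + of_nat j) * (b + of_nat j) /
      ((c + of_nat j) * (1 + a + b - c - of_nat n + of_nat j) * (of_nat j + 1)))"
  unfolding saalschuetz_term_def pochhammer_Suc fact_Suc times_divide_times_eq
  by (simp add: algebra_simps)

lemma saalschuetz_term_Suc_param:
  assumes "a + b - c - of_nat n \<noteq> 0"
  shows "saalschuetz_term n a b c j = saalschuetz_term (Suc n) a b c j *
     ((of_nat n + 1 - of_nat j) * (a + b - c - of_nat n) /
      ((of_nat n + 1) * (a + b - c - of_nat n + of_nat j)))"
proof -
  define e where "e = a + b - c - of_nat n"
  have "pochhammer (- of_nat n) j * (of_nat n + 1)
      = pochhammer (- of_nat (Suc n)) j * (of_nat n + 1 - of_nat j :: 'a)"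
    using pochhammer_shift[of "- of_nat (Suc n) :: 'a" j] by (simp add: algebra_simps)
  then have numerator: "pochhammer (- of_nat n) j
      = pochhammer (- of_nat (Suc n)) j * (of_nat n + 1 - of_nat j) / (of_nat n + 1 :: 'a)"
    by (simp add: nonzero_eq_divide_eq of_nat_add_one_neq_0)
  have "pochhammer (1 + a + b - c - of_nat n) j * e = pochhammer e j * (e + of_nat j)"
    using pochhammer_shift[of e j] by (simp add: e_def algebra_simps)
  then have denominator:
    "pochhammer (1 + a + b - c - of_nat n) j = pochhammer e j * (e + of_nat j) / e"
    using assms by (simp add: nonzero_eq_divide_eq e_def)
  have "1 + a + b - c - of_nat (Suc n) = e"
    by (simp add: e_def)
  with numerator denominator show ?thesis
    unfolding saalschuetz_term_def e_def[symmetric]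
    by (simp add: divide_divide_eq_left divide_divide_eq_right mult_ac)
qed

lemma saalschuetz_polynomial_identity:
  fixes a b c n j :: "'a::comm_ring_1"
  defines "e \<equiv> a + b - c - n"
  shows "(n + 1) * (c + n) * (e + j) + (c - a + n) * (c - b + n) * (n + 1 - j)
       = (n + 1 - j) * (a + j) * (b + j) + j * (c + j - 1) * (e + j)"
  unfolding e_def by (simp add: algebra_simps)

lemma saalschuetz_term_telescoping:
  assumes "c + of_nat j \<noteq> 0" "c + of_nat n \<noteq> 0"
    and "a + b - c - of_nat n \<noteq> 0" "a + b - c - of_nat n + of_nat j \<noteq> 0"
  shows "saalschuetz_term (Suc n) a b c j
      - (c - a + of_nat n) * (c - b + of_nat n) / ((c + of_nat n) * (c - a - b + of_nat n))
        * saalschuetz_term n a b c j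
    = saalschuetz_certificate n a b c (Suc j) - saalschuetz_certificate n a b c j"
    (is "?lhs = ?rhs")
proof -
  define e where "e = a + b - c - of_nat n"
  define t where "t = saalschuetz_term (Suc n) a b c j"
  define D where "D = (of_nat n + 1) * (c + of_nat n) * (e + of_nat j)"
  have nonzero: "(of_nat n + 1 :: 'a) \<noteq> 0" "(of_nat j + 1 :: 'a) \<noteq> 0"
    "e \<noteq> 0" "e + of_nat j \<noteq> 0" "c + of_nat j \<noteq> 0" "c + of_nat n \<noteq> 0"
    using assms unfolding e_def by (simp_all add: of_nat_add_one_neq_0)
  then have "D \<noteq> 0"
    unfolding D_def by simp
  have term_n: "saalschuetz_term n a b c j = t *
     ((of_nat n + 1 - of_nat j) * e / ((of_nat n + 1) * (e + of_nat j)))"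
    using saalschuetz_term_Suc_param[OF assms(3)] by (simp add: t_def e_def)
  have minus_e: "c - a - b + of_nat n = - e"
    by (simp add: e_def)
  have "(c - a + of_nat n) * (c - b + of_nat n) / ((c + of_nat n) * (c - a - b + of_nat n))
      * saalschuetz_term n a b c j
      = - t * ((c - a + of_nat n) * (c - b + of_nat n) * (of_nat n + 1 - of_nat j)) / D"
    using nonzero unfolding minus_e term_n D_def by (simp add: divide_simps)
  then have "?lhs = t - - t * ((c - a + of_nat n) * (c - b + of_nat n) * (of_nat n + 1 - of_nat j)) / D"
    unfolding t_def by (rule arg_cong)
  also have "\<dots> = t * (D + (c - a + of_nat n) * (c - b + of_nat n) * (of_nat n + 1 - of_nat j)) / D"
    using \<open>D \<noteq> 0\<close> by (simp add: field_simps)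
  finally have lhs: "?lhs = \<dots>" .
  have term_Suc: "saalschuetz_term (Suc n) a b c (Suc j) = t *
     ((of_nat j - (of_nat n + 1)) * (a + of_nat j) * (b + of_nat j) /
      ((c + of_nat j) * (e + of_nat j) * (of_nat j + 1)))"
    using saalschuetz_term_Suc_index[of "Suc n" a b c j] by (simp add: t_def e_def algebra_simps)
  have rhs: "?rhs = t * ((of_nat n + 1 - of_nat j) * (a + of_nat j) * (b + of_nat j)
      + of_nat j * (c + of_nat j - 1) * (e + of_nat j)) / D"
    using nonzero unfolding saalschuetz_certificate_def term_Suc t_def[symmetric] D_def
    by (simp add: divide_simps) (simp add: algebra_simps)
  have "D + (c - a + of_nat n) * (c - b + of_nat n) * (of_nat n + 1 - of_nat j)
      = (of_nat n + 1 - of_nat j) * (a + of_nat j) * (b + of_nat j)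
        + of_nat j * (c + of_nat j - 1) * (e + of_nat j)"
    unfolding D_def e_def by (rule saalschuetz_polynomial_identity)
  then show ?thesis
    unfolding lhs rhs by (rule arg_cong)
qed

lemma saalschuetz_sum_Suc:
  assumes "pochhammer c (Suc n) \<noteq> 0" "pochhammer (c - a - b) (Suc n) \<noteq> 0"
  shows "(\<Sum>j\<le>Suc n. saalschuetz_term (Suc n) a b c j)
    = (c - a + of_nat n) * (c - b + of_nat n) / ((c + of_nat n) * (c - a - b + of_nat n))
      * (\<Sum>j\<le>n. saalschuetz_term n a b c j)"
proof -
  define \<rho> where
    "\<rho> = (c - a + of_nat n) * (c - b + of_nat n) / ((c + of_nat n) * (c - a - b + of_nat n))"
  define G where "G = saalschuetz_certificate n a b c"
  have c_nonzero: "c + of_nat j \<noteq> 0" if "j \<le> n" for j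
    using assms(1) that unfolding pochhammer_eq_0_iff
    by (metis eq_neg_iff_add_eq_0 le_imp_less_Suc)
  have e_nonzero: "a + b - c - of_nat n + of_nat j \<noteq> 0" if "j \<le> n" for j
  proof
    assume "a + b - c - of_nat n + of_nat j = 0"
    then have "c - a - b = - of_nat (n - j)"
      using that by (simp add: of_nat_diff algebra_simps)
    with assms(2) show False
      unfolding pochhammer_eq_0_iff by auto
  qed
  have "(\<Sum>j\<le>n. saalschuetz_term (Suc n) a b c j - \<rho> * saalschuetz_term n a b c j)
      = (\<Sum>j\<le>n. G (Suc j) - G j)"
    unfolding \<rho>_def G_def using c_nonzero e_nonzero e_nonzero[of 0]
    by (intro sum.cong refl saalschuetz_term_telescoping) auto
  also have "\<dots> = G (Suc n) - G 0"
    by (simp add: lessThan_Suc_atMost[symmetric] sum_lessThan_telescope)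
  also have "\<dots> = - saalschuetz_term (Suc n) a b c (Suc n)"
    using c_nonzero[of n] of_nat_add_one_neq_0[of n, where ?'a='a]
    unfolding G_def saalschuetz_certificate_def by (simp add: divide_simps)
  finally show ?thesis
    unfolding \<rho>_def[symmetric] by (simp add: sum_subtractf sum_distrib_left diff_eq_eq)
qed

theorem pfaff_saalschuetz:
  assumes "pochhammer c n \<noteq> 0" "pochhammer (c - a - b) n \<noteq> 0"
  shows "(\<Sum>j\<le>n. saalschuetz_term n a b c j)
    = pochhammer (c - a) n * pochhammer (c - b) n / (pochhammer c n * pochhammer (c - a - b) n)"
  using assms
proof (induction n)
  case 0
  then show ?case
    by (simp add: saalschuetz_term_def)
next
  case (Suc n)
  then have "pochhammer c n \<noteq> 0" "pochhammer (c - a - b) n \<noteq> 0"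
    by (simp_all add: pochhammer_Suc)
  have "(\<Sum>j\<le>Suc n. saalschuetz_term (Suc n) a b c j)
    = (c - a + of_nat n) * (c - b + of_nat n) / ((c + of_nat n) * (c - a - b + of_nat n))
      * (\<Sum>j\<le>n. saalschuetz_term n a b c j)"
    by (rule saalschuetz_sum_Suc[OF Suc.prems])
  also have "\<dots> = (c - a + of_nat n) * (c - b + of_nat n) / ((c + of_nat n) * (c - a - b + of_nat n))
      * (pochhammer (c - a) n * pochhammer (c - b) n / (pochhammer c n * pochhammer (c - a - b) n))"
    using Suc.IH \<open>pochhammer c n \<noteq> 0\<close> \<open>pochhammer (c - a - b) n \<noteq> 0\<close> by simp
  also have "\<dots> = pochhammer (c - a) (Suc n) * pochhammer (c - b) (Suc n)
      / (pochhammer c (Suc n) * pochhammer (c - a - b) (Suc n))"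
    by (simp add: pochhammer_Suc times_divide_times_eq mult_ac)
  finally show ?case .
qed

theorem mainTheorem4:
  fixes m k :: nat and \<beta> \<gamma> :: complex
  assumes "m \<ge> 1" and "k \<ge> 1"
    and "\<beta> - of_nat k - 1 \<notin> \<int>\<^sub>\<le>\<^sub>0"
    and "- of_nat m - of_nat k - \<gamma> \<notin> \<int>\<^sub>\<le>\<^sub>0"
    and "\<beta> - \<gamma> - of_nat m - of_nat k \<notin> \<int>\<^sub>\<le>\<^sub>0"
  shows "hyp3F2_trunc (- of_nat m) (\<beta> - of_nat k - 1) (- of_nat m - of_nat k - \<gamma>)
            (- of_nat m - of_nat k) (\<beta> - \<gamma> - of_nat m - of_nat k) 1 m
         = pochhammer \<beta> m * pochhammer \<gamma> m /
           (pochhammer (1 + of_nat k) m * pochhammer (1 + of_nat k + \<gamma> - \<beta>) m)"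
proof -
  define a b c where "a = \<beta> - of_nat k - 1" and "b = - of_nat m - of_nat k - \<gamma>"
    and "c = - of_nat m - (of_nat k :: complex)"
  have c_minus_b: "c - b = \<gamma>" and c_minus_a_b: "c - a - b = 1 + of_nat k + \<gamma> - \<beta>"
    by (simp_all add: a_def b_def c_def algebra_simps)
  have "c - a = 1 - \<beta> - of_nat m" "c = 1 - (1 + of_nat k) - of_nat m"
    "1 + of_nat k + \<gamma> - \<beta> = 1 - (\<beta> - \<gamma> - of_nat m - of_nat k) - of_nat m"
    by (simp_all add: a_def c_def algebra_simps)
  then have reflect_c_minus_a: "pochhammer (c - a) m = (- 1) ^ m * pochhammer \<beta> m"
    and reflect_c: "pochhammer c m = (- 1) ^ m * pochhammer (1 + of_nat k) m"
    and reflect_c_minus_a_b: "pochhammer (c - a - b) m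
      = (- 1) ^ m * pochhammer (\<beta> - \<gamma> - of_nat m - of_nat k) m"
    unfolding c_minus_a_b by (simp_all only: pochhammer_reflect)
  have "pochhammer c m \<noteq> 0" "pochhammer (c - a - b) m \<noteq> 0"
    using assms(5) of_nat_in_nonpos_Ints_iff[of "Suc k", where ?'a=complex]
    unfolding reflect_c reflect_c_minus_a_b by (auto dest: pochhammer_eq_0_imp_nonpos_Int)
  have "hyp3F2_trunc (- of_nat m) (\<beta> - of_nat k - 1) (- of_nat m - of_nat k - \<gamma>)
            (- of_nat m - of_nat k) (\<beta> - \<gamma> - of_nat m - of_nat k) 1 m
      = (\<Sum>j\<le>m. saalschuetz_term m a b c j)"
    unfolding hyp3F2_trunc_def saalschuetz_term_def a_def b_def c_def
    by (simp add: atLeast0AtMost algebra_simps)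
  also have "\<dots> = pochhammer (c - a) m * pochhammer (c - b) m
      / (pochhammer c m * pochhammer (c - a - b) m)"
    by (rule pfaff_saalschuetz) fact+
  also have "\<dots> = pochhammer \<beta> m * pochhammer \<gamma> m /
           (pochhammer (1 + of_nat k) m * pochhammer (1 + of_nat k + \<gamma> - \<beta>) m)"
    by (simp add: reflect_c_minus_a reflect_c c_minus_b c_minus_a_b)
  finally show ?thesis .
qed

end
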